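(* Let $01234$ be a convex pentagon inscribed in a circle, with vertices in cyclic order. Let the side lengths be $$a_0=|23|,\quad a_1=|34|,\quad a_2=|40|,\quad a_3=|01|,\quad a_4=|12|,$$ so that $a_i$ is the length of the side opposite vertex $i$. Let $d_0=|14|$ be the diagonal disjoint from the side $23$. Then $$\left(d_0^2-a_2^2-a_3^2\right)^2(a_0d_0+a_1a_4)(a_1d_0+a_0a_4)(a_4d_0+a_0a_1)=(a_2a_3)^2\left[d_0^3-(a_0^2+a_1^2+a_4^2)d_0-2a_0a_1a_4\right]^2.$$ Equivalently, $X=d_0$ is a root of $$(X^2-q)^2(PX^3+SX^2+PQX+P^2)=p^2(X^3-QX-2P)^2,$$ where $p=a_2a_3$, $P=a_0a_1a_4$, $q=a_2^2+a_3^2$, $Q=a_0^2+a_1^2+a_4^2$, and $S=(a_0a_1)^2+(a_0a_4)^2+(a_1a_4)^2$.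
   Context: $|ij|$ denotes the distance between vertices $i$ and $j$. *)

theory Defs
  imports "HOL-Analysis.Analysis"
begin

text \<open>Distinct points on a circle taken in their cyclic
order always form a convex polygon, and every convex cyclic pentagon listed in cyclic order
arises this way (possibly after reflection, which does not change the distances).\<close>

definition convex_cyclic_pentagon :: "(nat \<Rightarrow> complex) \<Rightarrow> bool" where
  "convex_cyclic_pentagon v \<longleftrightarrow>
     (\<exists>c r \<theta>. r > 0 \<and>
        (\<forall>i<5. v i = c + of_real r * cis (\<theta> i)) \<and>
        \<theta> 0 < \<theta> 1 \<and> \<theta> 1 < \<theta> 2 \<and> \<theta> 2 < \<theta> 3 \<and> \<theta> 3 < \<theta> 4 \<and>
        \<theta> 4 < \<theta> 0 + 2 * pi)"

end

theory Submission imports Defs begin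

text \<open>Scale the pentagon so that its circumdiameter is 1 and let x, y, z, t be the
half-arcs cut off by the sides 23, 34, 12, 01. Every chord is the sine of the
half-arc it spans, so
a0 = sin x, a1 = sin y, a4 = sin z, a3 = sin t, d0 = sin s with s = x + y + z,
and a2 = sin (s + t). The law of cosines in the triangle 014 gives
d0^2 - a2^2 - a3^2 = -2 a2 a3 cos s; Ptolemy's theorem in the quadrilateral 1234
turns each of the three factors a0 d0 + a1 a4, ... into a product of two of the
diagonals sin (x + y), sin (y + z), sin (z + x); and the cubic
d0^3 - (a0^2 + a1^2 + a4^2) d0 - 2 a0 a1 a4 equals 2 cos s times the product of
these three diagonals. Both sides of the relation therefore become
4 (a2 a3 cos s)^2 (sin (x + y) sin (y + z) sin (z + x))^2.\<close>

lemma norm_cis_diff: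
  assumes "0 \<le> b - a" "b - a \<le> 2 * pi"
  shows "cmod (cis a - cis b) = 2 * sin ((b - a) / 2)"
proof -
  have "(cmod (cis a - cis b))^2 = (cos a - cos b)^2 + (sin a - sin b)^2"
    by (simp add: cmod_power2)
  also have "\<dots> = 2 - 2 * cos (b - a)"
    by (simp add: cos_diff power2_eq_square algebra_simps)
  also have "b - a = 2 * ((b - a) / 2)"
    by simp
  also have "cos (2 * ((b - a) / 2)) = 1 - 2 * sin ((b - a) / 2)^2"
    using cos_double_sin [of "(b - a) / 2"] by simp
  also have "2 - 2 * (1 - 2 * sin ((b - a) / 2)^2) = (2 * sin ((b - a) / 2))^2"
    by (simp add: power2_eq_square)
  finally have "(cmod (cis a - cis b))^2 = (2 * sin ((b - a) / 2))^2" .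
  moreover have "0 \<le> sin ((b - a) / 2)"
    using assms by (intro sin_ge_zero) auto
  ultimately show ?thesis
    by (metis power2_eq_iff_nonneg norm_ge_zero mult_nonneg_nonneg zero_le_numeral)
qed

lemma dist_on_circle:
  assumes "0 \<le> r" "0 \<le> b - a" "b - a \<le> 2 * pi"
  shows "dist (c + of_real r * cis a) (c + of_real r * cis b) = 2 * r * sin ((b - a) / 2)"
proof -
  have "dist (c + of_real r * cis a) (c + of_real r * cis b) = r * cmod (cis a - cis b)"
    using assms(1) by (simp add: dist_norm norm_mult right_diff_distrib [symmetric])
  with norm_cis_diff [OF assms(2,3)] show ?thesis
    by simp
qed

lemma convex_cyclic_pentagon_dist:
  assumes "convex_cyclic_pentagon v"
  obtains r \<theta> where
    "\<And>i j. i \<le> j \<Longrightarrow> j < 5 \<Longrightarrow> dist (v i) (v j) = 2 * r * sin ((\<theta> j - \<theta> i) / 2)"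
proof -
  obtain c r \<theta> where r: "r > 0" and v: "\<And>i. i < 5 \<Longrightarrow> v i = c + of_real r * cis (\<theta> i)"
    and "\<theta> 0 < \<theta> 1" "\<theta> 1 < \<theta> 2" "\<theta> 2 < \<theta> 3" "\<theta> 3 < \<theta> 4" "\<theta> 4 < \<theta> 0 + 2 * pi"
    using assms unfolding convex_cyclic_pentagon_def by blast
  then have arc: "0 \<le> \<theta> j - \<theta> i \<and> \<theta> j - \<theta> i \<le> 2 * pi" if "i \<le> j" "j < 5" for i j
    using that by (auto simp: less_Suc_eq numeral_eq_Suc le_Suc_eq)
  have "dist (v i) (v j) = 2 * r * sin ((\<theta> j - \<theta> i) / 2)" if "i \<le> j" "j < 5" for i j
  proof -
    have "dist (v i) (v j) = dist (c + of_real r * cis (\<theta> i)) (c + of_real r * cis (\<theta> j))"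
      using that by (simp add: v)
    also have "\<dots> = 2 * r * sin ((\<theta> j - \<theta> i) / 2)"
      using arc [OF that] r by (intro dist_on_circle) auto
    finally show ?thesis .
  qed
  then show ?thesis
    using that by blast
qed

lemma sin_add_mult_sin_add:
  fixes a b c :: real
  shows "sin (a + b) * sin (b + c) = sin a * sin c + sin b * sin (a + b + c)"
proof -
  have "sin a^2 + cos a^2 = 1" "sin b^2 + cos b^2 = 1" "sin c^2 + cos c^2 = 1"
    by simp_all
  then show ?thesis
    unfolding sin_add cos_add by algebra
qed

lemma sin_law_of_cosines:
  fixes s t :: real
  shows "sin s^2 - sin (s + t)^2 - sin t^2 = - 2 * sin (s + t) * sin t * cos s"
proof -
  have "sin s^2 + cos s^2 = 1" "sin t^2 + cos t^2 = 1"
    by simp_all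
  then show ?thesis
    unfolding sin_add cos_add by algebra
qed

lemma sin_add3_cubic:
  fixes x y z :: real
  shows "sin (x + y + z)^3 - (sin x^2 + sin y^2 + sin z^2) * sin (x + y + z)
           - 2 * sin x * sin y * sin z
         = 2 * cos (x + y + z) * sin (x + y) * sin (y + z) * sin (z + x)"
proof -
  have "sin x^2 + cos x^2 = 1" "sin y^2 + cos y^2 = 1" "sin z^2 + cos z^2 = 1"
    by simp_all
  then show ?thesis
    unfolding sin_add cos_add by algebra
qed

lemma pentagon_relation_sin:
  fixes k x y z t :: real
  defines "s \<equiv> x + y + z"
  assumes a0: "a0 = k * sin x" and a1: "a1 = k * sin y" and a4: "a4 = k * sin z"
    and d0: "d0 = k * sin s" and a2: "a2 = k * sin (s + t)" and a3: "a3 = k * sin t"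
  shows "(d0^2 - a2^2 - a3^2)^2 * (a0*d0 + a1*a4) * (a1*d0 + a0*a4) * (a4*d0 + a0*a1)
         = (a2*a3)^2 * (d0^3 - (a0^2 + a1^2 + a4^2)*d0 - 2*a0*a1*a4)^2"
proof -
  have cosines: "d0^2 - a2^2 - a3^2 = - 2 * a2 * a3 * cos s"
  proof -
    have "d0^2 - a2^2 - a3^2 = k^2 * (sin s^2 - sin (s + t)^2 - sin t^2)"
      by (simp add: a2 a3 d0 power_mult_distrib algebra_simps)
    also have "\<dots> = k^2 * (- 2 * sin (s + t) * sin t * cos s)"
      by (simp only: sin_law_of_cosines)
    also have "\<dots> = - 2 * a2 * a3 * cos s"
      by (simp add: a2 a3 power2_eq_square)
    finally show ?thesis .
  qed
  have ptolemy:
    "a0*d0 + a1*a4 = k^2 * (sin (z + x) * sin (x + y))"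
    "a1*d0 + a0*a4 = k^2 * (sin (x + y) * sin (y + z))"
    "a4*d0 + a0*a1 = k^2 * (sin (y + z) * sin (z + x))"
    using sin_add_mult_sin_add [of z x y] sin_add_mult_sin_add [of x y z]
      sin_add_mult_sin_add [of y z x]
    by (simp_all add: a0 a1 a4 d0 s_def algebra_simps power2_eq_square)
  have cubic: "d0^3 - (a0^2 + a1^2 + a4^2)*d0 - 2*a0*a1*a4
      = k^3 * (2 * cos s * sin (x + y) * sin (y + z) * sin (z + x))"
  proof -
    have "d0^3 - (a0^2 + a1^2 + a4^2)*d0 - 2*a0*a1*a4
        = k^3 * (sin s^3 - (sin x^2 + sin y^2 + sin z^2) * sin s - 2 * sin x * sin y * sin z)"
      by (simp add: a0 a1 a4 d0 power_mult_distrib algebra_simps power2_eq_square power3_eq_cube)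
    then show ?thesis
      unfolding s_def sin_add3_cubic .
  qed
  show ?thesis
    unfolding cosines ptolemy cubic by (simp add: power2_eq_square power3_eq_cube algebra_simps)
qed

theorem theorem4:
  fixes v :: "nat \<Rightarrow> complex"
  assumes "convex_cyclic_pentagon v"
  defines "a0 \<equiv> dist (v 2) (v 3)" and "a1 \<equiv> dist (v 3) (v 4)" and "a2 \<equiv> dist (v 4) (v 0)"
      and "a3 \<equiv> dist (v 0) (v 1)" and "a4 \<equiv> dist (v 1) (v 2)" and "d0 \<equiv> dist (v 1) (v 4)"
  shows "(d0^2 - a2^2 - a3^2)^2 * (a0*d0 + a1*a4) * (a1*d0 + a0*a4) * (a4*d0 + a0*a1)
         = (a2*a3)^2 * (d0^3 - (a0^2 + a1^2 + a4^2)*d0 - 2*a0*a1*a4)^2"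
proof -
  obtain r \<theta> where chord:
    "\<And>i j. i \<le> j \<Longrightarrow> j < 5 \<Longrightarrow> dist (v i) (v j) = 2 * r * sin ((\<theta> j - \<theta> i) / 2)"
    using convex_cyclic_pentagon_dist [OF assms(1)] by blast
  define x y z t where "x = (\<theta> 3 - \<theta> 2) / 2" and "y = (\<theta> 4 - \<theta> 3) / 2"
    and "z = (\<theta> 2 - \<theta> 1) / 2" and "t = (\<theta> 1 - \<theta> 0) / 2"
  have arcs: "(\<theta> 3 - \<theta> 2) / 2 = x" "(\<theta> 4 - \<theta> 3) / 2 = y" "(\<theta> 2 - \<theta> 1) / 2 = z"
    "(\<theta> 1 - \<theta> 0) / 2 = t" "(\<theta> 4 - \<theta> 1) / 2 = x + y + z" "(\<theta> 4 - \<theta> 0) / 2 = x + y + z + t"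
    by (simp_all add: x_def y_def z_def t_def field_simps)
  have "a0 = 2 * r * sin x" "a1 = 2 * r * sin y" "a4 = 2 * r * sin z"
    "d0 = 2 * r * sin (x + y + z)" "a2 = 2 * r * sin (x + y + z + t)" "a3 = 2 * r * sin t"
    using chord [of 2 3] chord [of 3 4] chord [of 1 2] chord [of 1 4] chord [of 0 4] chord [of 0 1]
    unfolding arcs by (simp_all add: a0_def a1_def a2_def a3_def a4_def d0_def dist_commute)
  then show ?thesis
    by (rule pentagon_relation_sin)
qed

end
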